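(* For $0\le n\le m$ let $\alpha_n:\mathbb R\to\mathbb R$ be polynomials. The differential operator $K=\sum_{n=0}^m\alpha_n(x)\frac{d^n}{dx^n}=\sum_{n=0}^m\alpha_n(A^\dagger)A^n$ acting on $f\in\mathcal C_0^\infty(\mathbb R)$ is dual, with duality function $D(x,n)=x^n$ ($x\in\mathbb R$, $n\in\mathbb N$), to the operator $\widehat K=\sum_{n=0}^m a^n\alpha_n(a^\dagger)$ acting on functions $f:\mathbb N\to\mathbb R$; that is, $K_lD=\widehat K_rD$.
   Context: $\mathbb N=\{0,1,2,\dots\}$. On smooth functions $f:\mathbb R\to\mathbb R$: $Af(x)=f'(x)$, $A^\dagger f(x)=xf(x)$. On functions $f:\mathbb N\to\mathbb R$: $af(n)=nf(n-1)$, $a^\dagger f(n)=f(n+1)$. For a polynomial $\alpha$, $\alpha(a^\dagger)$ is the corresponding polynomial in the operator $a^\dagger$, and $a^n\alpha_n(a^\dagger)$ means first apply $\alpha_n(a^\dagger)$ then $a^n$. Left/right actions: $(K_lD)(x,n)=(KD(\cdot,n))(x)$, $(\widehat K_rD)(x,n)=(\widehat KD(x,\cdot))(n)$. *)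

theory Defs
  imports "HOL-Analysis.Analysis" "HOL-Computational_Algebra.Polynomial"
begin

definition A_op :: "(real \<Rightarrow> real) \<Rightarrow> (real \<Rightarrow> real)" where
  "A_op f = deriv f"
definition A_dag :: "(real \<Rightarrow> real) \<Rightarrow> (real \<Rightarrow> real)" where
  "A_dag f = (\<lambda>x. x * f x)"

definition a_op :: "(nat \<Rightarrow> real) \<Rightarrow> (nat \<Rightarrow> real)" where
  "a_op f = (\<lambda>n. real n * f (n - 1))"
definition a_dag :: "(nat \<Rightarrow> real) \<Rightarrow> (nat \<Rightarrow> real)" where
  "a_dag f = (\<lambda>n. f (n + 1))"

definition op_poly :: "real poly \<Rightarrow> (('a \<Rightarrow> real) \<Rightarrow> ('a \<Rightarrow> real)) \<Rightarrow> ('a \<Rightarrow> real) \<Rightarrow> ('a \<Rightarrow> real)" where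
  "op_poly p T f = (\<lambda>x. \<Sum>i\<le>degree p. coeff p i * (T ^^ i) f x)"

definition K_op :: "(nat \<Rightarrow> real poly) \<Rightarrow> nat \<Rightarrow> (real \<Rightarrow> real) \<Rightarrow> (real \<Rightarrow> real)" where
  "K_op \<alpha> m f = (\<lambda>x. \<Sum>n\<le>m. op_poly (\<alpha> n) A_dag ((A_op ^^ n) f) x)"

definition Khat_op :: "(nat \<Rightarrow> real poly) \<Rightarrow> nat \<Rightarrow> (nat \<Rightarrow> real) \<Rightarrow> (nat \<Rightarrow> real)" where
  "Khat_op \<alpha> m f = (\<lambda>k. \<Sum>n\<le>m. (a_op ^^ n) (op_poly (\<alpha> n) a_dag f) k)"

definition Dfun :: "real \<Rightarrow> nat \<Rightarrow> real" where
  "Dfun x n = x ^ n"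

end

theory Submission
  imports Defs
begin

text \<open>
  Both sides reduce to \<open>\<Sum>n\<le>m. \<alpha>\<^sub>n(x) k(k-1)\<cdots>(k-n+1) x\<^sup>k\<^sup>-\<^sup>n\<close>.
  On the left, \<open>A\<^sup>n\<close> differentiates the monomial \<open>y\<^sup>k\<close> and \<open>\<alpha>\<^sub>n(A\<^sup>\<dagger>)\<close> is multiplication
  by \<open>\<alpha>\<^sub>n(x)\<close>. On the right, \<open>j \<mapsto> x\<^sup>j\<close> is an eigenfunction of the shift \<open>a\<^sup>\<dagger>\<close> with
  eigenvalue \<open>x\<close>, so \<open>\<alpha>\<^sub>n(a\<^sup>\<dagger>)\<close> again multiplies by \<open>\<alpha>\<^sub>n(x)\<close>, and \<open>a\<^sup>n\<close> produces the
  same falling factorial as \<open>n\<close>-fold differentiation.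
\<close>

text \<open>With truncated subtraction the factor \<open>k - k = 0\<close> makes the product vanish for \<open>n > k\<close>,
  so this is the usual falling factorial of \<open>k\<close>.\<close>
definition falling_factorial :: "nat \<Rightarrow> nat \<Rightarrow> real" where
  "falling_factorial k n = (\<Prod>i<n. real (k - i))"

lemma falling_factorial_0 [simp]: "falling_factorial k 0 = 1"
  by (simp add: falling_factorial_def)

lemma falling_factorial_Suc: "falling_factorial k (Suc n) = falling_factorial k n * real (k - n)"
  by (simp add: falling_factorial_def)

lemma A_op_funpow_power:
  "(A_op ^^ n) (\<lambda>y. y ^ k) = (\<lambda>y. falling_factorial k n * y ^ (k - n))"
proof (induction n)
  case 0
  then show ?case by simp
next
  case (Suc n)
  have "deriv (\<lambda>y. falling_factorial k n * y ^ (k - n)) y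
          = falling_factorial k n * (real (k - n) * y ^ (k - n - 1))" for y :: real
    by (rule DERIV_imp_deriv) (auto intro!: derivative_eq_intros)
  then show ?case
    by (simp only: funpow.simps o_apply Suc.IH)
       (simp add: A_op_def falling_factorial_Suc fun_eq_iff)
qed

lemma A_dag_funpow: "(A_dag ^^ i) g = (\<lambda>x. x ^ i * g x)"
  by (induction i) (auto simp: A_dag_def fun_eq_iff)

lemma a_dag_funpow: "(a_dag ^^ i) f = (\<lambda>j. f (j + i))"
  by (induction i) (auto simp: a_dag_def fun_eq_iff)

lemma a_op_funpow: "(a_op ^^ n) g = (\<lambda>k. falling_factorial k n * g (k - n))"
proof (induction n arbitrary: g)
  case 0
  then show ?case by simp
next
  case (Suc n)
  show ?case
    by (simp only: funpow_Suc_right o_apply Suc)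
       (auto simp: a_op_def falling_factorial_Suc fun_eq_iff diff_Suc split: nat.splits)
qed

lemma op_poly_A_dag: "op_poly p A_dag g = (\<lambda>x. poly p x * g x)"
  by (simp add: op_poly_def A_dag_funpow poly_altdef sum_distrib_right mult.assoc)

lemma op_poly_a_dag_power: "op_poly p a_dag (\<lambda>j. x ^ j) = (\<lambda>j. poly p x * x ^ j)"
  by (simp add: op_poly_def a_dag_funpow poly_altdef sum_distrib_right sum_distrib_left
      power_add mult_ac)

theorem theorem3p1:
  fixes \<alpha> :: "nat \<Rightarrow> real poly" and m :: nat
  shows "\<forall>x k. K_op \<alpha> m (\<lambda>y. Dfun y k) x = Khat_op \<alpha> m (\<lambda>j. Dfun x j) k"
proof (intro allI)
  fix x k
  have "K_op \<alpha> m (\<lambda>y. Dfun y k) x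
          = (\<Sum>n\<le>m. poly (\<alpha> n) x * (falling_factorial k n * x ^ (k - n)))"
    by (simp add: K_op_def Dfun_def A_op_funpow_power op_poly_A_dag)
  also have "\<dots> = Khat_op \<alpha> m (\<lambda>j. Dfun x j) k"
    by (simp add: Khat_op_def Dfun_def a_op_funpow op_poly_a_dag_power mult_ac)
  finally show "K_op \<alpha> m (\<lambda>y. Dfun y k) x = Khat_op \<alpha> m (\<lambda>j. Dfun x j) k" .
qed

end
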